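(* Let $f\colon G\to G$ be a graph map with mapping torus $X$, and let $H$, $z$, $\widetilde P$ be as in the context. Let $\mathcal V_1,\dots,\mathcal V_m$ be the connected components of the union $\mathcal V$ of the vertical edges of $X$, and let $c_i\in H$ be the homology class of the unique embedded directed cycle in $\mathcal V_i$. Then $\det(I-z^{-1}\widetilde P)\doteq\prod_{i=1}^m(1-c_i)$.
   Context: $G$ is a finite connected graph; a graph map sends vertices to vertices and edges to nondegenerate edge paths. $X=G\times[0,1]/(x,1)\sim(f(x),0)$ is the mapping torus; its vertical edges are the arcs $\{v\}\times[0,1]$ for vertices $v$ of $G$, oriented from $v$ to $f(v)$; each component of their union consists of one directed cycle (a periodic orbit of $f$ on vertices) with trees attached. $H=H_1(X;\mathbb{Z})/\mathrm{torsion}$, $\widetilde X\to X$ is the universal free abelian cover with deck group $H$, $\widetilde G_0$ is a fixed component of the preimage of $G$ with stabilizer $K$, $\widetilde f\colon\widetilde G_0\to\widetilde G_0$ is a fixed lift of $f$, and $z\in H$ is the deck transformation such that for each $\widetilde x\in\widetilde G_0$ over $x$, $\widetilde f(\widetilde x)$ is the first point of $\widetilde G_0$ on the lift starting at $z\widetilde x$ of the arc $\{x\}\times[0,1]$. With a chosen lift of each vertex, $C_0(\widetilde G_0)\cong\mathbb{Z}[K]^V$ and $\widetilde P$ is the $\mathbb{Z}[K]$-matrix of $\widetilde f$ on $0$-chains. $\doteq$ means equality in $\mathbb{Z}[H]$ up to a unit $\pm h$, $h\in H$. *)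

theory Defs
  imports "HOL-Analysis.Determinants" "HOL-Library.Poly_Mapping" "HOL-Library.Function_Algebras"
begin

section \<open>Finite graphs (vertex type 'v, all of UNIV; edge set Es) and edge paths\<close>

text \<open>An oriented edge is a pair (e, b): b = True traverses e from src e to tgt e,
  b = False traverses it backwards.\<close>

definition osrc :: "('e \<Rightarrow> 'v) \<Rightarrow> ('e \<Rightarrow> 'v) \<Rightarrow> 'e \<times> bool \<Rightarrow> 'v" where
  "osrc src tgt x = (if snd x then src (fst x) else tgt (fst x))"

definition otgt :: "('e \<Rightarrow> 'v) \<Rightarrow> ('e \<Rightarrow> 'v) \<Rightarrow> 'e \<times> bool \<Rightarrow> 'v" where
  "otgt src tgt x = (if snd x then tgt (fst x) else src (fst x))"

fun is_path :: "'e set \<Rightarrow> ('e \<Rightarrow> 'v) \<Rightarrow> ('e \<Rightarrow> 'v) \<Rightarrow> 'v \<Rightarrow> ('e \<times> bool) list \<Rightarrow> 'v \<Rightarrow> bool" where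
  "is_path Es src tgt a [] b \<longleftrightarrow> a = b"
| "is_path Es src tgt a (x # xs) b \<longleftrightarrow>
     fst x \<in> Es \<and> osrc src tgt x = a \<and> is_path Es src tgt (otgt src tgt x) xs b"

definition graph_connected :: "'e set \<Rightarrow> ('e \<Rightarrow> 'v) \<Rightarrow> ('e \<Rightarrow> 'v) \<Rightarrow> bool" where
  "graph_connected Es src tgt \<longleftrightarrow> (\<forall>a b. \<exists>p. is_path Es src tgt a p b)"

definition graph_map :: "'e set \<Rightarrow> ('e \<Rightarrow> 'v) \<Rightarrow> ('e \<Rightarrow> 'v) \<Rightarrow> ('v \<Rightarrow> 'v)
    \<Rightarrow> ('e \<Rightarrow> ('e \<times> bool) list) \<Rightarrow> bool" where
  "graph_map Es src tgt fv fe \<longleftrightarrow>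
     (\<forall>e\<in>Es. fe e \<noteq> [] \<and> is_path Es src tgt (fv (src e)) (fe e) (fv (tgt e)))"

text \<open>1-cells of X: horizontal edges Inl e (e in Es) and vertical edges Inr v
  (the arc v x [0,1], from v to fv v). 2-cells: one for each edge e in Es.
  Integral 1-chains are functions ('e + 'v) => int vanishing off the 1-cells.\<close>

type_synonym ('e, 'v) chain = "'e + 'v \<Rightarrow> int"

definition chain_ok :: "'e set \<Rightarrow> ('e, 'v) chain \<Rightarrow> bool" where
  "chain_ok Es c \<longleftrightarrow> (\<forall>e. e \<notin> Es \<longrightarrow> c (Inl e) = 0)"

definition ochain :: "'e \<times> bool \<Rightarrow> ('e, 'v) chain" where
  "ochain x = (\<lambda>y. if y = Inl (fst x) then (if snd x then 1 else -1) else 0)"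

definition pchain :: "('e \<times> bool) list \<Rightarrow> ('e, 'v) chain" where
  "pchain p = sum_list (map ochain p)"

definition vchain :: "'v \<Rightarrow> ('e, 'v) chain" where
  "vchain v = (\<lambda>y. if y = Inr v then 1 else 0)"

definition bd1 :: "'e set \<Rightarrow> ('e \<Rightarrow> 'v) \<Rightarrow> ('e \<Rightarrow> 'v) \<Rightarrow> ('v::finite \<Rightarrow> 'v)
    \<Rightarrow> ('e, 'v) chain \<Rightarrow> 'v \<Rightarrow> int" where
  "bd1 Es src tgt fv c w =
     (\<Sum>e\<in>Es. c (Inl e) * (of_bool (tgt e = w) - of_bool (src e = w)))
   + (\<Sum>v\<in>UNIV. c (Inr v) * (of_bool (fv v = w) - of_bool (v = w)))"

definition cycles1 :: "'e set \<Rightarrow> ('e \<Rightarrow> 'v) \<Rightarrow> ('e \<Rightarrow> 'v) \<Rightarrow> ('v::finite \<Rightarrow> 'v)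
    \<Rightarrow> ('e, 'v) chain set" where
  "cycles1 Es src tgt fv = {c. chain_ok Es c \<and> bd1 Es src tgt fv c = (\<lambda>_. 0)}"

text \<open>Boundary of the 2-cell e x [0,1]: e, then the vertical edge at tgt e,
  then f(e) backwards, then the vertical edge at src e backwards.\<close>
definition cell2 :: "('e \<Rightarrow> 'v) \<Rightarrow> ('e \<Rightarrow> 'v) \<Rightarrow> ('e \<Rightarrow> ('e \<times> bool) list) \<Rightarrow> 'e
    \<Rightarrow> ('e, 'v) chain" where
  "cell2 src tgt fe e = ochain (e, True) + vchain (tgt e) - pchain (fe e) - vchain (src e)"

definition bdries2 :: "'e set \<Rightarrow> ('e \<Rightarrow> 'v) \<Rightarrow> ('e \<Rightarrow> 'v) \<Rightarrow> ('e \<Rightarrow> ('e \<times> bool) list)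
    \<Rightarrow> ('e, 'v) chain set" where
  "bdries2 Es src tgt fe =
     {c. \<exists>n :: 'e \<Rightarrow> int. c = (\<Sum>e\<in>Es. (\<lambda>y. n e * cell2 src tgt fe e y))}"

text \<open>Cycles that are zero in H_1(X;Z)/torsion.\<close>
definition sat_bdries :: "'e set \<Rightarrow> ('e \<Rightarrow> 'v) \<Rightarrow> ('e \<Rightarrow> 'v) \<Rightarrow> ('e \<Rightarrow> ('e \<times> bool) list)
    \<Rightarrow> ('e, 'v) chain set" where
  "sat_bdries Es src tgt fe =
     {c. \<exists>n :: int. n \<noteq> 0 \<and> (\<lambda>y. n * c y) \<in> bdries2 Es src tgt fe}"

text \<open>q : Z_1(X) -> 'h exhibits 'h as H = H_1(X;Z)/torsion:
  q is an additive surjection on 1-cycles whose kernel is the torsion-saturation of the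
  boundaries.\<close>
definition is_H_quotient :: "'e set \<Rightarrow> ('e \<Rightarrow> 'v) \<Rightarrow> ('e \<Rightarrow> 'v) \<Rightarrow> ('v::finite \<Rightarrow> 'v)
    \<Rightarrow> ('e \<Rightarrow> ('e \<times> bool) list) \<Rightarrow> (('e, 'v) chain \<Rightarrow> 'h::ab_group_add) \<Rightarrow> bool" where
  "is_H_quotient Es src tgt fv fe q \<longleftrightarrow>
     (\<forall>c\<in>cycles1 Es src tgt fv. \<forall>d\<in>cycles1 Es src tgt fv. q (c + d) = q c + q d)
   \<and> q ` cycles1 Es src tgt fv = UNIV
   \<and> (\<forall>c\<in>cycles1 Es src tgt fv. q c = 0 \<longleftrightarrow> c \<in> sat_bdries Es src tgt fe)"

section \<open>Vertices of the universal free abelian cover (relative to a base vertex v0)\<close>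

text \<open>A vertex of the cover over v is represented by (v, c) with c a 1-chain with
  boundary v - v0 (i.e. the abelianised class of a path from v0 to v); two representatives
  over the same vertex give the same point iff their difference (a 1-cycle) maps to 0 in H.\<close>

definition valid_lift :: "'e set \<Rightarrow> ('e \<Rightarrow> 'v) \<Rightarrow> ('e \<Rightarrow> 'v) \<Rightarrow> ('v::finite \<Rightarrow> 'v) \<Rightarrow> 'v
    \<Rightarrow> 'v \<times> ('e, 'v) chain \<Rightarrow> bool" where
  "valid_lift Es src tgt fv v0 x \<longleftrightarrow>
     chain_ok Es (snd x) \<and>
     bd1 Es src tgt fv (snd x) = (\<lambda>w. of_bool (w = fst x) - of_bool (w = v0))"

definition lift_eq :: "(('e, 'v) chain \<Rightarrow> 'h::ab_group_add)
    \<Rightarrow> 'v \<times> ('e, 'v) chain \<Rightarrow> 'v \<times> ('e, 'v) chain \<Rightarrow> bool" where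
  "lift_eq q x y \<longleftrightarrow> fst x = fst y \<and> q (snd x - snd y) = 0"

text \<open>deck_rel q h x y: y = h . x (action of the deck transformation h).\<close>
definition deck_rel :: "(('e, 'v) chain \<Rightarrow> 'h::ab_group_add) \<Rightarrow> 'h
    \<Rightarrow> 'v \<times> ('e, 'v) chain \<Rightarrow> 'v \<times> ('e, 'v) chain \<Rightarrow> bool" where
  "deck_rel q h x y \<longleftrightarrow> fst x = fst y \<and> q (snd y - snd x) = h"

text \<open>Vertices of the component of the preimage of G containing the lifted vertex b:
  those reached from b by lifting an edge path of G.\<close>
definition in_comp :: "'e set \<Rightarrow> ('e \<Rightarrow> 'v) \<Rightarrow> ('e \<Rightarrow> 'v) \<Rightarrow> (('e, 'v) chain \<Rightarrow> 'h::ab_group_add)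
    \<Rightarrow> 'v \<times> ('e, 'v) chain \<Rightarrow> 'v \<times> ('e, 'v) chain \<Rightarrow> bool" where
  "in_comp Es src tgt q b x \<longleftrightarrow>
     (\<exists>p. is_path Es src tgt (fst b) p (fst x) \<and> lift_eq q (fst x, snd b + pchain p) x)"

text \<open>Endpoint of the lift, starting at x, of the vertical arc over fst x.\<close>
definition vert_end :: "('v \<Rightarrow> 'v) \<Rightarrow> 'v \<times> ('e, 'v) chain \<Rightarrow> 'v \<times> ('e, 'v) chain" where
  "vert_end fv x = (fv (fst x), snd x + vchain (fst x))"

text \<open>The lift of f determined by the deck transformation z (on vertices):
  ftilde(x) = endpoint of the lift starting at z . x of the vertical arc.\<close>
definition ftilde :: "'e set \<Rightarrow> ('e \<Rightarrow> 'v) \<Rightarrow> ('e \<Rightarrow> 'v) \<Rightarrow> ('v::finite \<Rightarrow> 'v)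
    \<Rightarrow> (('e, 'v) chain \<Rightarrow> 'h::ab_group_add) \<Rightarrow> 'h
    \<Rightarrow> 'v \<times> ('e, 'v) chain \<Rightarrow> 'v \<times> ('e, 'v) chain" where
  "ftilde Es src tgt fv q z x =
     vert_end fv (fst x, snd x + (SOME g. g \<in> cycles1 Es src tgt fv \<and> q g = z))"

text \<open>The Z[K]-matrix of ftilde on 0-chains w.r.t. the chosen lifts (v, L v):
  column j has the entry k at row fv j, where ftilde(lift j) = k . lift (fv j).\<close>
definition Pmat :: "'e set \<Rightarrow> ('e \<Rightarrow> 'v) \<Rightarrow> ('e \<Rightarrow> 'v) \<Rightarrow> ('v::finite \<Rightarrow> 'v)
    \<Rightarrow> (('e, 'v) chain \<Rightarrow> 'h::ab_group_add) \<Rightarrow> 'h \<Rightarrow> ('v \<Rightarrow> ('e, 'v) chain)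
    \<Rightarrow> ('h \<Rightarrow>\<^sub>0 int) ^ 'v ^ 'v" where
  "Pmat Es src tgt fv q z L =
     (\<chi> i j. if i = fv j
             then Poly_Mapping.single
                    (THE k. deck_rel q k (fv j, L (fv j)) (ftilde Es src tgt fv q z (j, L j))) 1
             else 0)"

definition vert_rel :: "('v \<Rightarrow> 'v) \<Rightarrow> ('v \<times> 'v) set" where
  "vert_rel fv = ({(v, fv v) | v. True} \<union> {(fv v, v) | v. True})\<^sup>*"

definition vert_components :: "('v \<Rightarrow> 'v) \<Rightarrow> 'v set set" where
  "vert_components fv = UNIV // vert_rel fv"

text \<open>Vertices on the directed cycle of a component (periodic vertices); the cycle consists
  of the vertical edges at these vertices.\<close>
definition cycle_verts :: "('v \<Rightarrow> 'v) \<Rightarrow> 'v set \<Rightarrow> 'v set" where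
  "cycle_verts fv C = {u \<in> C. \<exists>n>0. (fv ^^ n) u = u}"

definition cycle_class :: "('v \<Rightarrow> 'v) \<Rightarrow> (('e, 'v) chain \<Rightarrow> 'h) \<Rightarrow> 'v set \<Rightarrow> 'h" where
  "cycle_class fv q C = q (\<Sum>u\<in>cycle_verts fv C. vchain u)"

definition assoc_unit :: "('h::ab_group_add \<Rightarrow>\<^sub>0 int) \<Rightarrow> ('h \<Rightarrow>\<^sub>0 int) \<Rightarrow> bool" where
  "assoc_unit a b \<longleftrightarrow> (\<exists>h \<epsilon>. (\<epsilon> = 1 \<or> \<epsilon> = -1) \<and> a = Poly_Mapping.single h \<epsilon> * b)"

end

theory Submission
  imports Defs "HOL-Combinatorics.Orbits"
begin

text \<open>
  With respect to the chosen lifts, column j of z^-1 P has a single nonzero entry, in row f j,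
  namely the class a j of the loop that runs along L j, up the vertical edge at j and back
  along L (f j). Hence I - z^-1 P is the transpose of I - A, where A is the a-weighted
  adjacency matrix of the functional graph of f on the vertices. Such a determinant splits
  into one factor for each component of the vertical subcomplex: the aperiodic vertices only
  contribute unipotent factors, and the cycle u_1 -> ... -> u_n of a component contributes
  1 - a u_1 * ... * a u_n, as one sees by contracting the cycle one edge at a time with a row
  and a column operation. Finally, the loop classes a u_i along a cycle telescope to the
  class of the cycle itself.
\<close>

section \<open>Periodic points\<close>

lemma funpow_in_invariant_set: "f ` S \<subseteq> S \<Longrightarrow> x \<in> S \<Longrightarrow> (f ^^ n) x \<in> S"
  by (induction n) auto

lemma finite_invariant_set_has_periodic_point:
  assumes "finite S" "f ` S \<subseteq> S" "x \<in> S"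
  obtains u where "u \<in> S" "u \<in> orbit f u"
proof -
  have "range (\<lambda>n. (f ^^ n) x) \<subseteq> S"
    using funpow_in_invariant_set[OF assms(2,3)] by blast
  then have "\<not> inj (\<lambda>n. (f ^^ n) x)"
    using assms(1) finite_imageD finite_subset infinite_UNIV_nat by blast
  then obtain m n where mn: "m < n" "(f ^^ m) x = (f ^^ n) x"
    unfolding inj_def by (metis linorder_neqE_nat)
  have "(f ^^ (n - m)) ((f ^^ m) x) = (f ^^ (n - m + m)) x"
    by (simp add: funpow_add)
  also have "\<dots> = (f ^^ m) x"
    using mn by simp
  finally have "(f ^^ (n - m)) ((f ^^ m) x) = (f ^^ m) x" .
  then have "(f ^^ m) x \<in> orbit f ((f ^^ m) x)"
    using mn(1) by (auto simp: orbit_altdef intro!: exI[of _ "n - m"])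
  then show thesis
    using that funpow_in_invariant_set[OF assms(2,3)] by blast
qed

lemma finite_aperiodic_set_has_source:
  assumes "finite S" "S \<noteq> {}" "\<And>u. u \<in> S \<Longrightarrow> u \<notin> orbit f u"
  shows "\<exists>j\<in>S. \<forall>l\<in>S. f l \<noteq> j"
proof (rule ccontr)
  assume "\<not> ?thesis"
  then have "S \<subseteq> f ` {l \<in> S. f l \<in> S}" by (force simp: image_iff)
  then have "card S \<le> card (f ` {l \<in> S. f l \<in> S})"
    using assms(1) by (intro card_mono) auto
  also have "\<dots> \<le> card {l \<in> S. f l \<in> S}"
    using assms(1) by (intro card_image_le) auto
  finally have "{l \<in> S. f l \<in> S} = S"
    using assms(1) by (intro card_seteq) auto
  then have "f ` S \<subseteq> S" by blast
  then show False
    using assms finite_invariant_set_has_periodic_point by (metis ex_in_conv)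
qed

lemma image_orbit: "f ` orbit f s = orbit f (f s)"
proof
  show "orbit f (f s) \<subseteq> f ` orbit f s"
  proof
    fix t assume "t \<in> orbit f (f s)"
    then show "t \<in> f ` orbit f s"
      by induction (auto intro: orbit.intros)
  qed
qed (auto intro: orbit_sim_step)

lemma image_periodic_orbit: "s \<in> orbit f s \<Longrightarrow> f ` orbit f s = orbit f s"
  by (simp add: image_orbit self_in_orbit_step)

lemma self_in_orbit_apply: "s \<in> orbit f s \<Longrightarrow> f s \<in> orbit f (f s)"
  by (simp add: self_in_orbit_step orbit.base)

section \<open>Components of the vertical subcomplex\<close>

lemma equiv_vert_rel: "equiv UNIV (vert_rel f)"
  unfolding vert_rel_def equiv_def
  by (auto simp: refl_rtrancl trans_rtrancl intro: sym_rtrancl symI)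

lemma vert_component_invariant:
  assumes "C \<in> vert_components f"
  shows "f ` C \<subseteq> C"
proof -
  obtain x where C: "C = vert_rel f `` {x}"
    using assms unfolding vert_components_def by (auto elim: quotientE)
  have "(x, f u) \<in> vert_rel f" if "(x, u) \<in> vert_rel f" for u
    using that unfolding vert_rel_def by (auto intro: rtrancl_into_rtrancl)
  then show ?thesis using C by auto
qed

lemma vert_rel_periodic_in_orbit:
  assumes "(u, w) \<in> vert_rel f" "u \<in> orbit f u" "w \<in> orbit f w"
  shows "w \<in> orbit f u"
proof -
  have "\<exists>n. (f ^^ n) w \<in> orbit f u"
    using assms(1) unfolding vert_rel_def
  proof (induction rule: rtrancl_induct)
    case base
    show ?case using assms(2) by (auto intro: exI[of _ 0])
  next
    case (step y y')
    then obtain n where n: "(f ^^ n) y \<in> orbit f u" by blast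
    from step(2) consider "y' = f y" | "y = f y'" by blast
    then show ?case
    proof cases
      case 1
      then have "(f ^^ n) y' = f ((f ^^ n) y)" by (simp add: funpow_swap1)
      then show ?thesis using n orbit.step by metis
    next
      case 2
      then have "(f ^^ Suc n) y' = (f ^^ n) y" by (simp add: funpow_Suc_right del: funpow.simps)
      then show ?thesis using n by metis
    qed
  qed
  then obtain n where n: "(f ^^ n) w \<in> orbit f u" by blast
  have "w \<in> orbit f ((f ^^ n) w)"
    using orbit_swap[OF assms(3) funpow_in_orbit[OF assms(3)]] .
  then show ?thesis using n by (rule orbit_trans)
qed

lemma cycle_verts_periodic: "cycle_verts f C = {u \<in> C. u \<in> orbit f u}"
  by (auto simp: cycle_verts_def orbit_altdef eq_commute)

lemma cycle_verts_eq_orbit: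
  fixes f :: "'v::finite \<Rightarrow> 'v"
  assumes C: "C \<in> vert_components f"
  obtains u where "u \<in> orbit f u" "cycle_verts f C = orbit f u"
proof -
  have inv: "f ` C \<subseteq> C" using C by (rule vert_component_invariant)
  have "C \<noteq> {}"
    using C equiv_vert_rel unfolding vert_components_def by (metis in_quotient_imp_non_empty)
  then obtain u where u: "u \<in> C" "u \<in> orbit f u"
    using finite_invariant_set_has_periodic_point[OF finite inv] by blast
  have "orbit f u \<subseteq> C"
    using u inv by (auto simp: orbit_altdef intro: funpow_in_invariant_set)
  moreover have "w \<in> orbit f w" if "w \<in> orbit f u" for w
    using u(2) that by (rule self_in_orbit_trans)
  moreover have "w \<in> orbit f u" if "w \<in> C" "w \<in> orbit f w" for w
  proof (rule vert_rel_periodic_in_orbit[OF _ u(2) that(2)])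
    show "(u, w) \<in> vert_rel f"
      using C u(1) that(1) quotient_eq_iff[OF equiv_vert_rel] unfolding vert_components_def by metis
  qed
  ultimately have "cycle_verts f C = orbit f u"
    unfolding cycle_verts_periodic by blast
  then show thesis using that u(2) by blast
qed

lemma UN_cycle_verts_eq: "(\<Union>C\<in>vert_components f. cycle_verts f C) = {u. u \<in> orbit f u}"
proof -
  have "vert_rel f `` {u} \<in> vert_components f" "u \<in> vert_rel f `` {u}" for u
    unfolding vert_components_def vert_rel_def by (auto intro: quotientI)
  then show ?thesis unfolding cycle_verts_periodic by blast
qed

lemma cycle_verts_disjoint:
  assumes "C \<in> vert_components f" "D \<in> vert_components f" "C \<noteq> D"
  shows "cycle_verts f C \<inter> cycle_verts f D = {}"
  using quotient_disj[OF equiv_vert_rel] assms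
  unfolding vert_components_def cycle_verts_periodic by blast

section \<open>Determinant of the identity minus a functional adjacency matrix\<close>

definition fun_adj :: "('v::finite \<Rightarrow> 'v) \<Rightarrow> ('v \<Rightarrow> 'a::zero) \<Rightarrow> 'a^'v^'v" where
  "fun_adj f a = (\<chi> j i. if i = f j then a j else 0)"

lemma fun_adj_zero [simp]: "fun_adj f (\<lambda>_. 0) = 0"
  by (simp add: fun_adj_def vec_eq_iff)

lemma one_minus_fun_adj_mult:
  fixes c :: "'v::finite \<Rightarrow> 'a::ring_1"
  shows "((mat 1 - fun_adj f c) ** N) $ j $ i = N $ j $ i - c j * N $ f j $ i"
proof -
  have "((mat 1 - fun_adj f c) ** N) $ j $ i
      = (\<Sum>l\<in>UNIV. (if l = j then N $ l $ i else 0) - (if l = f j then c j * N $ l $ i else 0))"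
    unfolding matrix_matrix_mult_def
    by (auto intro!: sum.cong simp: mat_def fun_adj_def left_diff_distrib)
  also have "\<dots> = N $ j $ i - c j * N $ f j $ i"
    by (simp add: sum_subtractf)
  finally show ?thesis .
qed

text \<open>The hypothesis says exactly that fun_adj f c ** fun_adj f b = 0.\<close>

lemma one_minus_fun_adj_add:
  fixes b c :: "'v::finite \<Rightarrow> 'a::ring_1"
  assumes "\<And>j. c j \<noteq> 0 \<Longrightarrow> b (f j) = 0"
  shows "mat 1 - fun_adj f (\<lambda>j. b j + c j) = (mat 1 - fun_adj f c) ** (mat 1 - fun_adj f b)"
proof -
  have "((mat 1 - fun_adj f c) ** (mat 1 - fun_adj f b)) $ j $ i
      = (mat 1 - fun_adj f (\<lambda>j. b j + c j)) $ j $ i" for j i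
    unfolding one_minus_fun_adj_mult using assms[of j]
    by (cases "c j = 0") (auto simp: mat_def fun_adj_def algebra_simps)
  then show ?thesis by (simp add: vec_eq_iff)
qed

lemma det_one_minus_fun_adj_add:
  fixes b c :: "'v::finite \<Rightarrow> 'a::comm_ring_1"
  assumes "\<And>j. c j \<noteq> 0 \<Longrightarrow> b (f j) = 0"
  shows "det (mat 1 - fun_adj f (\<lambda>j. b j + c j))
       = det (mat 1 - fun_adj f b) * det (mat 1 - fun_adj f c)"
proof -
  have "mat 1 - fun_adj f (\<lambda>j. b j + c j) = (mat 1 - fun_adj f c) ** (mat 1 - fun_adj f b)"
    using assms by (rule one_minus_fun_adj_add)
  then show ?thesis by (simp add: det_mul mult.commute)
qed

lemma det_one_minus_fun_adj_single:
  fixes x :: "'a::comm_ring_1"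
  shows "det (mat 1 - fun_adj f (\<lambda>l. if l = j then x else 0)) = (if f j = j then 1 - x else 1)"
proof (cases "f j = j")
  case True
  have "det (mat 1 - fun_adj f (\<lambda>l. if l = j then x else 0))
      = (\<Prod>i\<in>UNIV. (mat 1 - fun_adj f (\<lambda>l. if l = j then x else 0)) $ i $ i)"
    by (rule det_diagonal) (auto simp: mat_def fun_adj_def True)
  also have "\<dots> = (\<Prod>i\<in>UNIV. if i = j then 1 - x else 1)"
    by (rule prod.cong) (auto simp: mat_def fun_adj_def True)
  finally show ?thesis by (simp add: prod.delta True)
next
  case False
  have "mat 1 - fun_adj f (\<lambda>l. if l = j then x else 0)
      = (\<chi> k. if k = j then row j (mat 1) + (- x) *s row (f j) (mat 1) else row k (mat 1))"
    by (auto simp: vec_eq_iff mat_def fun_adj_def row_def)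
  then show ?thesis
    using det_row_operation[where i = j and j = "f j" and c = "- x" and A = "mat 1"] False by simp
qed

lemma det_one_minus_fun_adj_aperiodic:
  fixes a :: "'v::finite \<Rightarrow> 'a::comm_ring_1"
  assumes "\<And>j. a j \<noteq> 0 \<Longrightarrow> j \<notin> orbit f j"
  shows "det (mat 1 - fun_adj f a) = 1"
  using assms
proof (induction "card {j. a j \<noteq> 0}" arbitrary: a rule: less_induct)
  case less
  show ?case
  proof (cases "{j. a j \<noteq> 0} = {}")
    case True
    then have "a = (\<lambda>_. 0)" by auto
    then show ?thesis by simp
  next
    case False
    txt \<open>A source j of the support splits off as a factor of determinant 1.\<close>
    then obtain j where j: "a j \<noteq> 0" "\<And>l. a l \<noteq> 0 \<Longrightarrow> f l \<noteq> j"
      using finite_aperiodic_set_has_source[of "{j. a j \<noteq> 0}" f] less.prems by auto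
    have "f j \<noteq> j" using less.prems[OF j(1)] orbit.base[of f j] by auto
    have "det (mat 1 - fun_adj f (\<lambda>l. (if l = j then a j else 0) + (a(j := 0)) l))
        = det (mat 1 - fun_adj f (\<lambda>l. if l = j then a j else 0)) * det (mat 1 - fun_adj f (a(j := 0)))"
      by (rule det_one_minus_fun_adj_add) (metis fun_upd_apply j(2))
    moreover have "(\<lambda>l. (if l = j then a j else 0) + (a(j := 0)) l) = a" by auto
    ultimately have "det (mat 1 - fun_adj f a)
        = det (mat 1 - fun_adj f (\<lambda>l. if l = j then a j else 0)) * det (mat 1 - fun_adj f (a(j := 0)))"
      by simp
    also have "det (mat 1 - fun_adj f (\<lambda>l. if l = j then a j else 0)) = 1"
      using \<open>f j \<noteq> j\<close> by (simp add: det_one_minus_fun_adj_single)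
    also have "det (mat 1 - fun_adj f (a(j := 0))) = 1"
    proof (rule less.hyps)
      have "{l. (a(j := 0)) l \<noteq> 0} \<subset> {l. a l \<noteq> 0}" using j(1) by auto
      then show "card {l. (a(j := 0)) l \<noteq> 0} < card {l. a l \<noteq> 0}" by (simp add: psubset_card_mono)
      show "\<And>l. (a(j := 0)) l \<noteq> 0 \<Longrightarrow> l \<notin> orbit f l"
        using less.prems by (auto split: if_splits)
    qed
    finally show ?thesis by simp
  qed
qed

text \<open>
  Adding a j times row k to row j, and then a k times column k to column f k, removes the
  vertex k from the path j -> k -> f k and moves its weight to j.
\<close>

lemma det_one_minus_fun_adj_contract:
  fixes a :: "'v::finite \<Rightarrow> 'a::comm_ring_1"
  assumes fj: "f j = k" and jk: "j \<noteq> k" and fk: "f k \<noteq> k"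
    and pred: "\<And>l. l \<noteq> j \<Longrightarrow> f l = k \<Longrightarrow> a l = 0"
  shows "det (mat 1 - fun_adj f a) = det (mat 1 - fun_adj (f(j := f k)) (a(j := a j * a k, k := 0)))"
proof -
  define X where "X = mat 1 - fun_adj f a"
  have X: "X $ s $ t = (if s = t then 1 else 0) - (if t = f s then a s else 0)" for s t
    by (simp add: X_def mat_def fun_adj_def)
  define Y where "Y = (\<chi> r. if r = j then row j X + a j *s row k X else row r X)"
  have "det Y = det X"
    unfolding Y_def by (rule det_row_operation[OF jk])
  define Z where "Z = (\<chi> r. if r = f k then row (f k) (transpose Y) + a k *s row k (transpose Y)
                           else row r (transpose Y))"
  have "det Z = det (transpose Y)"
    unfolding Z_def using fk by (rule det_row_operation)
  have "Z $ r $ s = transpose (mat 1 - fun_adj (f(j := f k)) (a(j := a j * a k, k := 0))) $ r $ s" for r s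
    unfolding Z_def Y_def using fj jk fk pred
    by (auto simp: row_def transpose_def X mat_def fun_adj_def algebra_simps)
  then have "Z = transpose (mat 1 - fun_adj (f(j := f k)) (a(j := a j * a k, k := 0)))"
    by (simp add: vec_eq_iff)
  then show ?thesis
    using \<open>det Y = det X\<close> \<open>det Z = det (transpose Y)\<close> by (simp add: X_def)
qed

lemma det_one_minus_fun_adj_cycle:
  fixes a :: "'v::finite \<Rightarrow> 'a::comm_ring_1"
  assumes "distinct us" "us \<noteq> []" "map f us = rotate1 us" "\<And>l. l \<notin> set us \<Longrightarrow> a l = 0"
  shows "det (mat 1 - fun_adj f a) = 1 - (\<Prod>u\<in>set us. a u)"
  using assms
proof (induction us arbitrary: f a rule: length_induct)
  case (1 us)
  then obtain j us' where us: "us = j # us'" by (cases us) auto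
  show ?case
  proof (cases us')
    case Nil
    have "a = (\<lambda>l. if l = j then a j else 0)"
      using "1.prems"(4) us Nil by auto
    moreover have "f j = j" using "1.prems"(3) us Nil by simp
    ultimately show ?thesis
      using det_one_minus_fun_adj_single[of f j "a j"] us Nil by simp
  next
    case (Cons k rest)
    have dist: "distinct (j # k # rest)" using "1.prems"(1) us Cons by simp
    have fj: "f j = k" and frest: "f k # map f rest = rest @ [j]"
      using "1.prems"(3) us Cons by simp_all
    have inj: "inj_on f (set us)"
      using "1.prems"(1,3) by (metis distinct_map distinct1_rotate)
    have "f k \<noteq> k"
      using inj fj dist us Cons by (metis distinct_length_2_or_more inj_on_contraD list.set_intros(1,2))
    have pred: "a l = 0" if "l \<noteq> j" "f l = k" for l
      using that "1.prems"(4) inj fj us by (metis inj_onD list.set_intros(1))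
    define f' where "f' = f(j := f k)"
    define a' where "a' = a(j := a j * a k, k := 0)"
    have "det (mat 1 - fun_adj f a) = det (mat 1 - fun_adj f' a')"
      unfolding f'_def a'_def using fj dist \<open>f k \<noteq> k\<close> pred
      by (intro det_one_minus_fun_adj_contract) auto
    also have "\<dots> = 1 - (\<Prod>u\<in>set (j # rest). a' u)"
    proof (rule "1.IH"[rule_format])
      show "length (j # rest) < length us" using us Cons by simp
      show "distinct (j # rest)" using dist by simp
      show "map f' (j # rest) = rotate1 (j # rest)"
        using frest dist by (simp add: f'_def map_fun_upd)
      show "a' l = 0" if "l \<notin> set (j # rest)" for l
        using that "1.prems"(4) us Cons by (auto simp: a'_def)
    qed simp
    also have "(\<Prod>u\<in>set (j # rest). a' u) = (\<Prod>u\<in>set us. a u)"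
    proof -
      have "(\<Prod>u\<in>set rest. a' u) = (\<Prod>u\<in>set rest. a u)"
        using dist by (intro prod.cong) (auto simp: a'_def)
      then show ?thesis
        using dist us Cons by (simp add: a'_def mult.assoc)
    qed
    finally show ?thesis .
  qed
qed

lemma det_one_minus_fun_adj_orbit:
  fixes a :: "'v::finite \<Rightarrow> 'a::comm_ring_1"
  assumes u: "u \<in> orbit f u" and a: "\<And>l. l \<notin> orbit f u \<Longrightarrow> a l = 0"
  shows "det (mat 1 - fun_adj f a) = 1 - (\<Prod>w\<in>orbit f u. a w)"
proof -
  define m where "m = funpow_dist f (f u) u"
  define us where "us = map (\<lambda>n. (f ^^ n) u) [0..<Suc m]"
  have set_us: "set us = orbit f u"
    using orbit_conv_funpow_dist1[OF u] by (simp add: us_def m_def del: upt_Suc)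
  have "distinct us"
    using inj_on_funpow_dist1[OF u] by (simp add: us_def m_def distinct_map del: upt_Suc)
  moreover have "map f us = rotate1 us"
  proof -
    have "map f us = map (\<lambda>n. (f ^^ n) u) (map Suc [0..<m]) @ [(f ^^ Suc m) u]"
      by (simp add: us_def del: upt_Suc) (simp add: comp_def)
    also have "(f ^^ Suc m) u = u"
      using funpow_dist1_prop[OF u] by (simp add: m_def)
    also have "map (\<lambda>n. (f ^^ n) u) (map Suc [0..<m]) @ [u] = rotate1 us"
      by (simp add: us_def map_Suc_upt upt_conv_Cons del: upt_Suc)
    finally show ?thesis .
  qed
  ultimately show ?thesis
    using det_one_minus_fun_adj_cycle[of us f a] a unfolding set_us by (simp add: us_def)
qed

lemma det_one_minus_fun_adj_UN:
  fixes Z :: "'c \<Rightarrow> 'v::finite set" and a :: "'v \<Rightarrow> 'a::comm_ring_1"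
  assumes "finite K"
    and "\<And>C D. C \<in> K \<Longrightarrow> D \<in> K \<Longrightarrow> C \<noteq> D \<Longrightarrow> Z C \<inter> Z D = {}"
    and "\<And>C. C \<in> K \<Longrightarrow> f ` Z C \<subseteq> Z C"
  shows "det (mat 1 - fun_adj f (\<lambda>u. if u \<in> (\<Union>C\<in>K. Z C) then a u else 0))
       = (\<Prod>C\<in>K. det (mat 1 - fun_adj f (\<lambda>u. if u \<in> Z C then a u else 0)))"
  using assms
proof (induction K rule: finite_induct)
  case empty
  then show ?case by simp
next
  case (insert C K)
  have disj: "Z C \<inter> (\<Union>D\<in>K. Z D) = {}"
    using insert.prems(1) insert.hyps(2) by fastforce
  have inv: "f ` (\<Union>D\<in>K. Z D) \<subseteq> (\<Union>D\<in>K. Z D)"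
    using insert.prems(2) by fastforce
  have "det (mat 1 - fun_adj f (\<lambda>u. (if u \<in> Z C then a u else 0)
                                   + (if u \<in> (\<Union>D\<in>K. Z D) then a u else 0)))
      = det (mat 1 - fun_adj f (\<lambda>u. if u \<in> Z C then a u else 0))
      * det (mat 1 - fun_adj f (\<lambda>u. if u \<in> (\<Union>D\<in>K. Z D) then a u else 0))"
    by (rule det_one_minus_fun_adj_add) (use disj inv in \<open>auto split: if_splits\<close>)
  moreover have "(\<lambda>u. (if u \<in> Z C then a u else 0) + (if u \<in> (\<Union>D\<in>K. Z D) then a u else 0))
      = (\<lambda>u. if u \<in> (\<Union>D\<in>insert C K. Z D) then a u else 0)"
    using disj by (auto simp: fun_eq_iff)
  moreover have "det (mat 1 - fun_adj f (\<lambda>u. if u \<in> (\<Union>D\<in>K. Z D) then a u else 0))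
      = (\<Prod>D\<in>K. det (mat 1 - fun_adj f (\<lambda>u. if u \<in> Z D then a u else 0)))"
    using insert.prems by (intro insert.IH) auto
  ultimately show ?case
    using insert.hyps by simp
qed

theorem det_one_minus_fun_adj:
  fixes f :: "'v::finite \<Rightarrow> 'v" and a :: "'v \<Rightarrow> 'a::comm_ring_1"
  shows "det (mat 1 - fun_adj f a) = (\<Prod>C\<in>vert_components f. 1 - (\<Prod>u\<in>cycle_verts f C. a u))"
proof -
  let ?per = "\<lambda>u. if u \<in> (\<Union>C\<in>vert_components f. cycle_verts f C) then a u else 0"
  let ?aper = "\<lambda>u. if u \<in> orbit f u then 0 else a u"
  have "det (mat 1 - fun_adj f (\<lambda>u. ?aper u + ?per u))
      = det (mat 1 - fun_adj f ?aper) * det (mat 1 - fun_adj f ?per)"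
    by (rule det_one_minus_fun_adj_add) (auto simp: UN_cycle_verts_eq self_in_orbit_apply split: if_splits)
  moreover have "(\<lambda>u. ?aper u + ?per u) = a"
    by (auto simp: UN_cycle_verts_eq)
  moreover have "det (mat 1 - fun_adj f ?aper) = 1"
    by (rule det_one_minus_fun_adj_aperiodic) auto
  moreover have "det (mat 1 - fun_adj f ?per)
      = (\<Prod>C\<in>vert_components f. det (mat 1 - fun_adj f (\<lambda>u. if u \<in> cycle_verts f C then a u else 0)))"
  proof (rule det_one_minus_fun_adj_UN)
    show "f ` cycle_verts f C \<subseteq> cycle_verts f C" if "C \<in> vert_components f" for C
      using that by (metis cycle_verts_eq_orbit image_periodic_orbit order_refl)
  qed (simp_all add: cycle_verts_disjoint)
  moreover have "det (mat 1 - fun_adj f (\<lambda>u. if u \<in> cycle_verts f C then a u else 0))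
      = 1 - (\<Prod>u\<in>cycle_verts f C. a u)" if C: "C \<in> vert_components f" for C
  proof -
    obtain u where "u \<in> orbit f u" "cycle_verts f C = orbit f u"
      using C by (rule cycle_verts_eq_orbit)
    then show ?thesis by (simp add: det_one_minus_fun_adj_orbit)
  qed
  ultimately show ?thesis by simp
qed

section \<open>The matrix of the lifted map\<close>

lemma bd1_add: "bd1 Es src tgt fv (c + d) = (\<lambda>w. bd1 Es src tgt fv c w + bd1 Es src tgt fv d w)"
  by (simp add: bd1_def fun_eq_iff distrib_right sum.distrib)

lemma bd1_diff: "bd1 Es src tgt fv (c - d) = (\<lambda>w. bd1 Es src tgt fv c w - bd1 Es src tgt fv d w)"
  by (simp add: bd1_def fun_eq_iff left_diff_distrib sum_subtractf)

lemma bd1_vchain: "bd1 Es src tgt fv (vchain u) = (\<lambda>w. of_bool (fv u = w) - of_bool (u = w))"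
  by (simp add: bd1_def vchain_def fun_eq_iff if_distrib if_distribR sum.delta' cong: if_cong)

lemma cycles1_zero: "0 \<in> cycles1 Es src tgt fv"
  by (simp add: cycles1_def chain_ok_def bd1_def fun_eq_iff)

lemma cycles1_add:
  "c \<in> cycles1 Es src tgt fv \<Longrightarrow> d \<in> cycles1 Es src tgt fv \<Longrightarrow> c + d \<in> cycles1 Es src tgt fv"
  by (simp add: cycles1_def chain_ok_def bd1_add)

lemma H_quotient_add:
  "is_H_quotient Es src tgt fv fe q \<Longrightarrow> c \<in> cycles1 Es src tgt fv \<Longrightarrow> d \<in> cycles1 Es src tgt fv
    \<Longrightarrow> q (c + d) = q c + q d"
  by (simp add: is_H_quotient_def)

lemma H_quotient_zero: "is_H_quotient Es src tgt fv fe q \<Longrightarrow> q 0 = 0"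
  using H_quotient_add[OF _ cycles1_zero cycles1_zero, of Es src tgt fv fe q] by simp

lemma cycles1_sum:
  "(\<And>u. u \<in> A \<Longrightarrow> c u \<in> cycles1 Es src tgt fv) \<Longrightarrow> (\<Sum>u\<in>A. c u) \<in> cycles1 Es src tgt fv"
proof (induction A rule: infinite_finite_induct)
  case (insert x A)
  then show ?case
    unfolding sum.insert[OF insert.hyps] by (metis cycles1_add insertCI)
qed (simp_all only: sum.infinite sum.empty cycles1_zero simp_thms)

lemma H_quotient_sum:
  assumes "is_H_quotient Es src tgt fv fe q" "\<And>u. u \<in> A \<Longrightarrow> c u \<in> cycles1 Es src tgt fv"
  shows "q (\<Sum>u\<in>A. c u) = (\<Sum>u\<in>A. q (c u))"
  using assms(2)
proof (induction A rule: infinite_finite_induct)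
  case (insert x A)
  then show ?case
    unfolding sum.insert[OF insert.hyps]
    using H_quotient_add[OF assms(1)] cycles1_sum[of A c] by (metis insertCI)
qed (simp_all only: sum.infinite sum.empty H_quotient_zero[OF assms(1)] simp_thms)

text \<open>
  The 1-cycle that runs from v0 along L u, up the vertical edge at u, and back along L (fv u);
  by Pmat_entry its class is the entry of z^-1 P in column u.
\<close>

definition vertical_loop :: "('v \<Rightarrow> ('e, 'v) chain) \<Rightarrow> ('v \<Rightarrow> 'v) \<Rightarrow> 'v \<Rightarrow> ('e, 'v) chain" where
  "vertical_loop L fv u = L u + vchain u - L (fv u)"

lemma vertical_loop_in_cycles1:
  assumes "\<And>v. valid_lift Es src tgt fv v0 (v, L v)"
  shows "vertical_loop L fv u \<in> cycles1 Es src tgt fv"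
proof -
  have "chain_ok Es (vertical_loop L fv u)"
    using assms by (simp add: valid_lift_def chain_ok_def vertical_loop_def vchain_def)
  moreover have "bd1 Es src tgt fv (vertical_loop L fv u) = (\<lambda>_. 0)"
    using assms[of u] assms[of "fv u"] unfolding vertical_loop_def bd1_add bd1_diff bd1_vchain
    by (auto simp: valid_lift_def fun_eq_iff)
  ultimately show ?thesis by (simp add: cycles1_def)
qed

lemma Pmat_entry:
  assumes q: "is_H_quotient Es src tgt fv fe q" and L: "\<And>v. valid_lift Es src tgt fv v0 (v, L v)"
  shows "Pmat Es src tgt fv q z L $ i $ j
       = (if i = fv j then Poly_Mapping.single (z + q (vertical_loop L fv j)) 1 else 0)"
proof -
  define g where "g = (SOME g. g \<in> cycles1 Es src tgt fv \<and> q g = z)"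
  have "\<exists>g. g \<in> cycles1 Es src tgt fv \<and> q g = z"
    using q unfolding is_H_quotient_def by (metis UNIV_I image_iff)
  then have g: "g \<in> cycles1 Es src tgt fv" "q g = z"
    unfolding g_def by (metis (mono_tags, lifting) someI_ex)+
  have ft: "ftilde Es src tgt fv q z (j, L j) = (fv j, L j + g + vchain j)"
    by (simp add: ftilde_def vert_end_def g_def)
  have "q (L j + g + vchain j - L (fv j)) = q (g + vertical_loop L fv j)"
    by (simp add: vertical_loop_def algebra_simps)
  also have "\<dots> = z + q (vertical_loop L fv j)"
    using H_quotient_add[OF q g(1) vertical_loop_in_cycles1[OF L]] g(2) by simp
  finally show ?thesis by (simp add: Pmat_def deck_rel_def ft)
qed

lemma sum_vertical_loops_cycle_class:
  assumes q: "is_H_quotient Es src tgt fv fe q" and L: "\<And>v. valid_lift Es src tgt fv v0 (v, L v)"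
    and C: "C \<in> vert_components fv"
  shows "(\<Sum>u\<in>cycle_verts fv C. q (vertical_loop L fv u)) = cycle_class fv q C"
proof -
  obtain u where u: "u \<in> orbit fv u" and O: "cycle_verts fv C = orbit fv u"
    using C by (rule cycle_verts_eq_orbit)
  have fin: "finite (orbit fv u)" by simp
  have im: "fv ` orbit fv u = orbit fv u"
    using u by (rule image_periodic_orbit)
  then have "inj_on fv (orbit fv u)"
    using fin by (simp add: finite_surj_inj)
  then have "(\<Sum>w\<in>orbit fv u. L (fv w)) = (\<Sum>w\<in>orbit fv u. L w)"
    using sum.reindex[of fv "orbit fv u" L] im by simp
  then have "(\<Sum>w\<in>orbit fv u. vertical_loop L fv w) = (\<Sum>w\<in>orbit fv u. vchain w)"
    by (simp add: vertical_loop_def sum.distrib sum_subtractf)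
  moreover have "q (\<Sum>w\<in>orbit fv u. vertical_loop L fv w) = (\<Sum>w\<in>orbit fv u. q (vertical_loop L fv w))"
    using H_quotient_sum[OF q vertical_loop_in_cycles1[OF L]] .
  ultimately show ?thesis
    unfolding cycle_class_def O by simp
qed

lemma prod_single_one:
  fixes h :: "'u \<Rightarrow> 'h::comm_monoid_add"
  shows "(\<Prod>u\<in>A. Poly_Mapping.single (h u) (1::int)) = Poly_Mapping.single (\<Sum>u\<in>A. h u) 1"
  by (induction A rule: infinite_finite_induct) (simp_all add: mult_single)

theorem lemma4p1:
  fixes Es :: "'e set" and src tgt :: "'e \<Rightarrow> 'v::finite"
    and fv :: "'v \<Rightarrow> 'v" and fe :: "'e \<Rightarrow> ('e \<times> bool) list"
    and q :: "('e, 'v) chain \<Rightarrow> 'h::ab_group_add"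
    and v0 :: 'v and b :: "'v \<times> ('e, 'v) chain" and L :: "'v \<Rightarrow> ('e, 'v) chain" and z :: 'h
  assumes "finite Es"
    and "graph_connected Es src tgt"
    and "graph_map Es src tgt fv fe"
    and "is_H_quotient Es src tgt fv fe q"
    and "valid_lift Es src tgt fv v0 b"
    and "\<forall>v. valid_lift Es src tgt fv v0 (v, L v) \<and> in_comp Es src tgt q b (v, L v)"
    and "\<forall>x. valid_lift Es src tgt fv v0 x \<and> in_comp Es src tgt q b x \<longrightarrow>
            in_comp Es src tgt q b (ftilde Es src tgt fv q z x)"
  shows "assoc_unit
           (det (\<chi> i j. (if i = j then 1 else 0)
                   - Poly_Mapping.single (- z) 1 * Pmat Es src tgt fv q z L $ i $ j))
           (\<Prod>C\<in>vert_components fv. 1 - Poly_Mapping.single (cycle_class fv q C) 1)"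
proof -
  have L: "\<And>v. valid_lift Es src tgt fv v0 (v, L v)" using assms(6) by blast
  define a where "a u = Poly_Mapping.single (q (vertical_loop L fv u)) (1::int)" for u
  have "(\<chi> i j. (if i = j then 1 else 0) - Poly_Mapping.single (- z) 1 * Pmat Es src tgt fv q z L $ i $ j)
      = transpose (mat 1 - fun_adj fv a)"
    by (simp add: vec_eq_iff Pmat_entry[OF assms(4) L] mult_single a_def transpose_def
        mat_def fun_adj_def eq_commute)
  then have "det (\<chi> i j. (if i = j then 1 else 0)
                   - Poly_Mapping.single (- z) 1 * Pmat Es src tgt fv q z L $ i $ j)
      = (\<Prod>C\<in>vert_components fv. 1 - (\<Prod>u\<in>cycle_verts fv C. a u))"
    by (simp add: det_one_minus_fun_adj)
  also have "\<dots> = (\<Prod>C\<in>vert_components fv. 1 - Poly_Mapping.single (cycle_class fv q C) 1)"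
    unfolding a_def prod_single_one
    using sum_vertical_loops_cycle_class[OF assms(4) L] by simp
  finally show ?thesis
    unfolding assoc_unit_def by (intro exI[of _ 0] exI[of _ 1]) simp
qed

end
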